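(* For every labelled sequent $\mathfrak{S}$: if $\mathrm{labCS}^\infty \vdash \mathfrak{S}$, then $\mathcal{M}\Vdash\mathfrak{S}$ for every Carlson model $\mathcal{M}$.
   Context: Formulas: fix a countable set $\mathtt{Prop}$ of propositional atoms; formulas are generated by $A ::= \bot \mid p \mid A \to A \mid \Box A \mid \triangle A$ with $p \in \mathtt{Prop}$. Carlson models: a Carlson model is a tuple $\mathcal{M} = \langle W, \prec, M_0, M_1, V\rangle$ where $W$ is a non-empty set, $\prec \subseteq W\times W$ is transitive and conversely wellfounded (there is no infinite chain $w_0 \prec w_1 \prec \cdots$), $M_0, M_1 \subseteq W$, and $V : \mathtt{Prop} \to \mathcal{P}(W)$. Truth: $\mathcal{M},x \nVdash \bot$; $\mathcal{M},x\Vdash p$ iff $x \in V(p)$; $\mathcal{M},x \Vdash A\to B$ iff $\mathcal{M},x\nVdash A$ or $\mathcal{M},x\Vdash B$; $\mathcal{M},x\Vdash \Box A$ iff $\mathcal{M},y \Vdash A$ for all $y$ with $x \prec y$ and $y \in M_0$; $\mathcal{M},x\Vdash \triangle A$ iff $\mathcal{M},y \Vdash A$ for all $y$ with $x \prec y$ and $y \in M_1$. Labelled sequents: fix a countable set $\mathtt{Lab}$ of labels. A labelled formula is $x:A$ with $x\in\mathtt{Lab}$ and $A$ a formula; a relational atom is $xRy$ or $xSy$ with $x,y \in \mathtt{Lab}$. A sequent $\mathcal{R},\Gamma\Rightarrow\Omega$ consists of a finite multiset $\mathcal{R}$ of relational atoms and finite multisets $\Gamma,\Omega$ of labelled formulas;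 commas denote multiset union. $Lab(\mathfrak{S})$ is the set of labels occurring in $\mathfrak{S}$. Rules of $\mathrm{labCS}^\infty$ (premisses above, conclusion below; $\mathcal{R},\Gamma,\Omega$ arbitrary): (Id) no premiss, conclusion $\mathcal{R},\Gamma,x:p\Rightarrow x:p,\Omega$ with $p\in\mathtt{Prop}$; ($\bot$) no premiss, conclusion $\mathcal{R},\Gamma,x:\bot\Rightarrow\Omega$; ($\to$R) from $\mathcal{R},\Gamma,x:A\Rightarrow x:B,\Omega$ infer $\mathcal{R},\Gamma\Rightarrow x:A\to B,\Omega$; ($\to$L) from $\mathcal{R},\Gamma\Rightarrow x:A,\Omega$ and $\mathcal{R},\Gamma,x:B\Rightarrow\Omega$ infer $\mathcal{R},\Gamma,x:A\to B\Rightarrow\Omega$; ($\Box$R) from $\mathcal{R},xRy,\Gamma\Rightarrow y:A,\Omega$ infer $\mathcal{R},\Gamma\Rightarrow x:\Box A,\Omega$, provided $y$ does not occur in the conclusion; ($\Box$L) from $\mathcal{R},xRy,x:\Box A,y:A,\Gamma\Rightarrow\Omega$ infer $\mathcal{R},xRy,x:\Box A,\Gamma\Rightarrow\Omega$; ($\triangle$R) from $\mathcal{R},xSy,\Gamma\Rightarrow y:A,\Omega$ infer $\mathcal{R},\Gamma\Rightarrow x:\triangle A,\Omega$, provided $y$ does not occur in the conclusion; ($\triangle$L) from $\mathcal{R},xSy,x:\triangle A,y:A,\Gamma\Rightarrow\Omega$ infer $\mathcal{R},xSy,x:\triangle A,\Gamma\Rightarrow\Omega$; ($\mathrm{trans}_{\circ\bullet}$,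 for each $\circ,\bullet\in\{R,S\}$) from $\mathcal{R},x\circ y,y\bullet z,x\bullet z,\Gamma\Rightarrow\Omega$ infer $\mathcal{R},x\circ y,y\bullet z,\Gamma\Rightarrow\Omega$. Proofs: a pre-proof is a possibly infinite tree of sequents in which each node is the conclusion of an instance of a rule whose premisses are exactly its children. A trace along an infinite branch $(\mathfrak{S}_i)_{i<\omega}$ with $\mathfrak{S}_i=\mathcal{R}_i,\Gamma_i\Rightarrow\Omega_i$ is a sequence of labels $(x_i)_{i<\omega}$ such that for each $i$: $x_{i+1}=x_i$, or $x_iRx_{i+1}\in\mathcal{R}_i$, or $x_iSx_{i+1}\in\mathcal{R}_i$. A trace is progressing if it is not eventually constant; a branch is progressing if it has a progressing trace. A proof is a pre-proof in which every branch is either finite or progressing. $\mathrm{labCS}^\infty\vdash\mathfrak{S}$ means there is a proof with root $\mathfrak{S}$. Semantics of sequents: given a sequent $\mathfrak{S}=\mathcal{R},\Gamma\Rightarrow\Omega$ and a Carlson model $\mathcal{M}$, an interpretation is a map $I: Lab(\mathfrak{S})\to W$ such that $xRy\in\mathcal{R}$ implies $I(x)\prec I(y)$ and $I(y)\in M_0$, and $xSy\in\mathcal{R}$ implies $I(x)\prec I(y)$ and $I(y)\in M_1$. $\mathcal{M}\Vdash\mathfrak{S}$ means: for every interpretation $I$ of $\mathfrak{S}$ on $\mathcal{M}$, if $\mathcal{M},I(x)\Vdash A$ for all $x:A\in\Gamma$, then $\mathcal{M},I(y)\Vdash B$ for some $y:B\in\Omega$. *)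

theory Defs
  imports Main "HOL-Library.Multiset" "HOL-Library.Countable"
begin

datatype 'p fm = Bot | Atom 'p | Imp "'p fm" "'p fm" | Box "'p fm" | Tri "'p fm"

text \<open>A Carlson model is given by a carrier type 'w (non-empty, as every HOL type),
  a relation prec, sets M0, M1 and a valuation V.\<close>

definition carlson_model :: "('w \<Rightarrow> 'w \<Rightarrow> bool) \<Rightarrow> bool" where
  "carlson_model prec \<longleftrightarrow>
     (\<forall>x y z. prec x y \<longrightarrow> prec y z \<longrightarrow> prec x z) \<and>
     \<not> (\<exists>f :: nat \<Rightarrow> 'w. \<forall>i. prec (f i) (f (Suc i)))"

primrec sat :: "('w \<Rightarrow> 'w \<Rightarrow> bool) \<Rightarrow> 'w set \<Rightarrow> 'w set \<Rightarrow> ('p \<Rightarrow> 'w set)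
                  \<Rightarrow> 'w \<Rightarrow> 'p fm \<Rightarrow> bool" where
  "sat prec M0 M1 V x Bot = False"
| "sat prec M0 M1 V x (Atom p) = (x \<in> V p)"
| "sat prec M0 M1 V x (Imp A B) = (\<not> sat prec M0 M1 V x A \<or> sat prec M0 M1 V x B)"
| "sat prec M0 M1 V x (Box A) = (\<forall>y. prec x y \<and> y \<in> M0 \<longrightarrow> sat prec M0 M1 V y A)"
| "sat prec M0 M1 V x (Tri A) = (\<forall>y. prec x y \<and> y \<in> M1 \<longrightarrow> sat prec M0 M1 V y A)"

datatype rk = RR | SS

datatype 'l ratom = RAt rk 'l 'l   \<comment> \<open>RAt RR x y is xRy, RAt SS x y is xSy\<close>

datatype ('l, 'p) seq = Seq "'l ratom multiset" "('l \<times> 'p fm) multiset" "('l \<times> 'p fm) multiset"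

fun rels :: "('l, 'p) seq \<Rightarrow> 'l ratom multiset" where
  "rels (Seq R G Om) = R"

fun ratom_labels :: "'l ratom \<Rightarrow> 'l set" where
  "ratom_labels (RAt k x y) = {x, y}"

fun seq_labels :: "('l, 'p) seq \<Rightarrow> 'l set" where
  "seq_labels (Seq R G Om) =
     (\<Union>a\<in>set_mset R. ratom_labels a) \<union> fst ` set_mset G \<union> fst ` set_mset Om"

inductive rule :: "('l, 'p) seq list \<Rightarrow> ('l, 'p) seq \<Rightarrow> bool" where
  Id: "rule [] (Seq R (add_mset (x, Atom p) G) (add_mset (x, Atom p) Om))"
| BotL: "rule [] (Seq R (add_mset (x, Bot) G) Om)"
| ImpR: "rule [Seq R (add_mset (x, A) G) (add_mset (x, B) Om)]
              (Seq R G (add_mset (x, Imp A B) Om))"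
| ImpL: "rule [Seq R G (add_mset (x, A) Om), Seq R (add_mset (x, B) G) Om]
              (Seq R (add_mset (x, Imp A B) G) Om)"
| BoxR: "y \<notin> seq_labels (Seq R G (add_mset (x, Box A) Om)) \<Longrightarrow>
         rule [Seq (add_mset (RAt RR x y) R) G (add_mset (y, A) Om)]
              (Seq R G (add_mset (x, Box A) Om))"
| BoxL: "rule [Seq (add_mset (RAt RR x y) R) (add_mset (x, Box A) (add_mset (y, A) G)) Om]
              (Seq (add_mset (RAt RR x y) R) (add_mset (x, Box A) G) Om)"
| TriR: "y \<notin> seq_labels (Seq R G (add_mset (x, Tri A) Om)) \<Longrightarrow>
         rule [Seq (add_mset (RAt SS x y) R) G (add_mset (y, A) Om)]
              (Seq R G (add_mset (x, Tri A) Om))"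
| TriL: "rule [Seq (add_mset (RAt SS x y) R) (add_mset (x, Tri A) (add_mset (y, A) G)) Om]
              (Seq (add_mset (RAt SS x y) R) (add_mset (x, Tri A) G) Om)"
| Trans: "rule [Seq (add_mset (RAt c x y) (add_mset (RAt b y z) (add_mset (RAt b x z) R))) G Om]
               (Seq (add_mset (RAt c x y) (add_mset (RAt b y z) R)) G Om)"

text \<open>A (possibly infinite) tree is a prefix-closed set P of positions (lists of child
  indices) containing the root [], with a sequent lab n at each node n.\<close>

definition pre_proof :: "nat list set \<Rightarrow> (nat list \<Rightarrow> ('l, 'p) seq) \<Rightarrow> bool" where
  "pre_proof P lab \<longleftrightarrow>
     [] \<in> P \<and>
     (\<forall>n i. n @ [i] \<in> P \<longrightarrow> n \<in> P) \<and>
     (\<forall>n\<in>P. \<exists>k. (\<forall>i. n @ [i] \<in> P \<longleftrightarrow> i < k) \<and>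
                 rule (map (\<lambda>i. lab (n @ [i])) [0..<k]) (lab n))"

definition inf_branch :: "nat list set \<Rightarrow> (nat \<Rightarrow> nat list) \<Rightarrow> bool" where
  "inf_branch P b \<longleftrightarrow> b 0 = [] \<and> (\<forall>i. b i \<in> P \<and> (\<exists>c. b (Suc i) = b i @ [c]))"

definition is_trace :: "(nat \<Rightarrow> ('l, 'p) seq) \<Rightarrow> (nat \<Rightarrow> 'l) \<Rightarrow> bool" where
  "is_trace S x \<longleftrightarrow>
     (\<forall>i. x (Suc i) = x i \<or> RAt RR (x i) (x (Suc i)) \<in># rels (S i)
                          \<or> RAt SS (x i) (x (Suc i)) \<in># rels (S i))"

definition progressing_trace :: "(nat \<Rightarrow> ('l, 'p) seq) \<Rightarrow> (nat \<Rightarrow> 'l) \<Rightarrow> bool" where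
  "progressing_trace S x \<longleftrightarrow> is_trace S x \<and> \<not> (\<exists>n. \<forall>m\<ge>n. x m = x n)"

definition is_proof :: "nat list set \<Rightarrow> (nat list \<Rightarrow> ('l, 'p) seq) \<Rightarrow> bool" where
  "is_proof P lab \<longleftrightarrow> pre_proof P lab \<and>
     (\<forall>b. inf_branch P b \<longrightarrow> (\<exists>x. progressing_trace (\<lambda>i. lab (b i)) x))"

definition provable :: "('l, 'p) seq \<Rightarrow> bool" where
  "provable S \<longleftrightarrow> (\<exists>P lab. is_proof P lab \<and> lab [] = S)"

definition is_interp :: "('w \<Rightarrow> 'w \<Rightarrow> bool) \<Rightarrow> 'w set \<Rightarrow> 'w set \<Rightarrow> ('l, 'p) seq
                               \<Rightarrow> ('l \<Rightarrow> 'w) \<Rightarrow> bool" where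
  "is_interp prec M0 M1 S I \<longleftrightarrow>
     (\<forall>x y. RAt RR x y \<in># rels S \<longrightarrow> prec (I x) (I y) \<and> I y \<in> M0) \<and>
     (\<forall>x y. RAt SS x y \<in># rels S \<longrightarrow> prec (I x) (I y) \<and> I y \<in> M1)"

fun valid_in :: "('w \<Rightarrow> 'w \<Rightarrow> bool) \<Rightarrow> 'w set \<Rightarrow> 'w set \<Rightarrow> ('p \<Rightarrow> 'w set)
                   \<Rightarrow> ('l, 'p) seq \<Rightarrow> bool" where
  "valid_in prec M0 M1 V (Seq R G Om) \<longleftrightarrow>
     (\<forall>I. is_interp prec M0 M1 (Seq R G Om) I \<longrightarrow>
          (\<forall>(x, A)\<in>set_mset G. sat prec M0 M1 V (I x) A) \<longrightarrow>
          (\<exists>(y, B)\<in>set_mset Om. sat prec M0 M1 V (I y) B))"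

end

theory Submission
  imports Defs "HOL-Library.Infinite_Set"
begin

(* Countermodels are reflected from conclusions to premisses: if an interpretation falsifies
   the conclusion of a rule instance, some premiss is falsified by an interpretation agreeing
   with it on the labels of the conclusion (for the right rules of the modalities, the fresh
   label is sent to a witness world).  A falsified root therefore yields an infinite branch,
   and since labels are never forgotten along it, a single interpretation falsifies every
   sequent of the branch.  Under this interpretation each step of a trace either stays at a
   world or moves along the relation, and it moves whenever the label changes; a progressing
   trace would thus produce an infinite ascending chain, which a Carlson model does not have. *)

lemma eventually_no_ascent:
  assumes "transp r" and "\<not> (\<exists>f. \<forall>i. r (f i) (f (Suc i)))"
    and steps: "\<And>m. w (Suc m) = w m \<or> r (w m) (w (Suc m))"
  shows "\<exists>n. \<forall>m\<ge>n. \<not> r (w m) (w (Suc m))"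
proof (rule ccontr)
  define A where "A = {m. r (w m) (w (Suc m))}"
  assume "\<nexists>n. \<forall>m\<ge>n. \<not> r (w m) (w (Suc m))"
  then have "infinite A"
    unfolding A_def infinite_nat_iff_unbounded_le by auto
  have closure: "w j = w i \<or> r (w i) (w j)" if "i \<le> j" for i j
    using that
  proof (induction j rule: dec_induct)
    case (step j)
    then show ?case using steps[of j] \<open>transp r\<close> by (auto dest: transpD)
  qed simp
  have "r (w (enumerate A k)) (w (enumerate A (Suc k)))" for k
  proof -
    have "r (w (enumerate A k)) (w (Suc (enumerate A k)))"
      using enumerate_in_set[OF \<open>infinite A\<close>] unfolding A_def by blast
    moreover have "Suc (enumerate A k) \<le> enumerate A (Suc k)"
      using enumerate_step[OF \<open>infinite A\<close>] by (simp add: Suc_leI)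
    ultimately show ?thesis
      using closure \<open>transp r\<close> by (metis transpD)
  qed
  then have "\<forall>k. r ((w \<circ> enumerate A) k) ((w \<circ> enumerate A) (Suc k))"
    by simp
  with assms(2) show False
    by blast
qed

lemma ex_union_of_function_chain:
  assumes "\<And>k. L k \<subseteq> L (Suc k)" and "\<And>k z. z \<in> L k \<Longrightarrow> f (Suc k) z = f k z"
  shows "\<exists>g. \<forall>k. \<forall>z\<in>L k. g z = f k z"
proof -
  have stable: "f j z = f k z" if "k \<le> j" "z \<in> L k" for j k z
    using that(1)
  proof (induction j rule: dec_induct)
    case (step j)
    have "L k \<subseteq> L j"
      using \<open>k \<le> j\<close> assms(1) by (simp add: lift_Suc_mono_le)
    then show ?case using step.IH assms(2) \<open>z \<in> L k\<close> by auto
  qed simp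
  have "f k z = f (LEAST k. z \<in> L k) z" if "z \<in> L k" for k z
    using stable[of "LEAST k. z \<in> L k" k z] Least_le LeastI that by metis
  then show ?thesis
    by (auto intro: exI[of _ "\<lambda>z. f (LEAST k. z \<in> L k) z"])
qed

fun falsifies :: "('w \<Rightarrow> 'w \<Rightarrow> bool) \<Rightarrow> 'w set \<Rightarrow> 'w set \<Rightarrow> ('p \<Rightarrow> 'w set)
                    \<Rightarrow> ('l, 'p) seq \<Rightarrow> ('l \<Rightarrow> 'w) \<Rightarrow> bool" where
  "falsifies prec M0 M1 V (Seq R G Om) I \<longleftrightarrow>
     is_interp prec M0 M1 (Seq R G Om) I \<and>
     (\<forall>(x, A)\<in>set_mset G. sat prec M0 M1 V (I x) A) \<and>
     (\<forall>(y, B)\<in>set_mset Om. \<not> sat prec M0 M1 V (I y) B)"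

lemma valid_in_iff_not_falsifies:
  "valid_in prec M0 M1 V S \<longleftrightarrow> (\<forall>I. \<not> falsifies prec M0 M1 V S I)"
  by (cases S) (simp, blast)

lemma falsifies_is_interp: "falsifies prec M0 M1 V S I \<Longrightarrow> is_interp prec M0 M1 S I"
  by (cases S) simp

lemma falsifies_cong:
  assumes "\<And>z. z \<in> seq_labels S \<Longrightarrow> I' z = I z"
  shows "falsifies prec M0 M1 V S I' \<longleftrightarrow> falsifies prec M0 M1 V S I"
proof (cases S)
  case (Seq R G Om)
  have "I' x = I x \<and> I' y = I y" if "RAt k x y \<in># R" for k x y
    using assms that by (force simp: Seq)
  moreover have "I' (fst p) = I (fst p)" if "p \<in># G \<or> p \<in># Om" for p
    using assms that by (force simp: Seq)
  ultimately show ?thesis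
    by (simp add: Seq is_interp_def split_beta cong: ball_cong)
qed

lemma is_interp_add_mset_rel [simp]:
  "is_interp prec M0 M1 (Seq (add_mset (RAt k x y) R) G Om) I \<longleftrightarrow>
   is_interp prec M0 M1 (Seq R G Om) I \<and> prec (I x) (I y) \<and> I y \<in> (if k = RR then M0 else M1)"
  unfolding is_interp_def by (cases k) auto

lemma is_interp_add_mset_formula [simp]:
  "is_interp prec M0 M1 (Seq R (add_mset a G) Om) I \<longleftrightarrow> is_interp prec M0 M1 (Seq R G Om) I"
  "is_interp prec M0 M1 (Seq R G (add_mset a Om)) I \<longleftrightarrow> is_interp prec M0 M1 (Seq R G Om) I"
  unfolding is_interp_def by auto

lemma falsifies_fresh_successor:
  assumes "y \<notin> seq_labels (Seq R G Om)" and "x \<noteq> y"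
    and "falsifies prec M0 M1 V (Seq R G Om) I"
    and "prec (I x) u" and "u \<in> (if k = RR then M0 else M1)" and "\<not> sat prec M0 M1 V u A"
  shows "falsifies prec M0 M1 V (Seq (add_mset (RAt k x y) R) G (add_mset (y, A) Om)) (I(y := u))"
proof -
  have "\<And>z. z \<in> seq_labels (Seq R G Om) \<Longrightarrow> (I(y := u)) z = I z"
    using assms(1) by auto
  then have "falsifies prec M0 M1 V (Seq R G Om) (I(y := u))"
    using assms(3) falsifies_cong by blast
  then show ?thesis
    using assms(2,4-6) by auto
qed

lemma rule_labels_mono: "rule ps c \<Longrightarrow> p \<in> set ps \<Longrightarrow> seq_labels c \<subseteq> seq_labels p"
  by (induction rule: rule.induct) (auto simp: image_iff; force)+

lemma rule_falsified_premiss: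
  assumes "rule ps c" and "transp prec" and "falsifies prec M0 M1 V c I"
  shows "\<exists>p\<in>set ps. \<exists>I'. falsifies prec M0 M1 V p I' \<and> (\<forall>z\<in>seq_labels c. I' z = I z)"
  using assms
proof (induction rule: rule.induct)
  case (BoxR y R G x A Om)
  then obtain u where "prec (I x) u" "u \<in> M0" "\<not> sat prec M0 M1 V u A"
    by auto
  with BoxR have "falsifies prec M0 M1 V (Seq (add_mset (RAt RR x y) R) G (add_mset (y, A) Om)) (I(y := u))"
    by (intro falsifies_fresh_successor) auto
  moreover have "\<forall>z\<in>seq_labels (Seq R G (add_mset (x, Box A) Om)). (I(y := u)) z = I z"
    using BoxR.hyps by auto
  ultimately show ?case
    by (metis list.set_intros(1))
next
  case (TriR y R G x A Om)
  then obtain u where "prec (I x) u" "u \<in> M1" "\<not> sat prec M0 M1 V u A"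
    by auto
  with TriR have "falsifies prec M0 M1 V (Seq (add_mset (RAt SS x y) R) G (add_mset (y, A) Om)) (I(y := u))"
    by (intro falsifies_fresh_successor) auto
  moreover have "\<forall>z\<in>seq_labels (Seq R G (add_mset (x, Tri A) Om)). (I(y := u)) z = I z"
    using TriR.hyps by auto
  ultimately show ?case
    by (metis list.set_intros(1))
next
  case (Trans c x y b z R G Om)
  then have "prec (I x) (I z)"
    by (auto dest: transpD)
  with Trans show ?case
    by auto
qed (auto intro: exI[of _ I])

lemma falsified_child:
  assumes "pre_proof P lab" and "n \<in> P" and "transp prec"
    and "falsifies prec M0 M1 V (lab n) I"
  shows "\<exists>i I'. n @ [i] \<in> P \<and> falsifies prec M0 M1 V (lab (n @ [i])) I' \<and>
    seq_labels (lab n) \<subseteq> seq_labels (lab (n @ [i])) \<and> (\<forall>z\<in>seq_labels (lab n). I' z = I z)"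
proof -
  obtain k where children: "\<And>i. n @ [i] \<in> P \<longleftrightarrow> i < k"
    and r: "rule (map (\<lambda>i. lab (n @ [i])) [0..<k]) (lab n)"
    using assms(1,2) unfolding pre_proof_def by blast
  obtain i I' where "i < k" and "falsifies prec M0 M1 V (lab (n @ [i])) I'"
    and "\<forall>z\<in>seq_labels (lab n). I' z = I z"
    using rule_falsified_premiss[OF r assms(3,4)] by auto
  moreover have "seq_labels (lab n) \<subseteq> seq_labels (lab (n @ [i]))"
    using rule_labels_mono[OF r] \<open>i < k\<close> by auto
  ultimately show ?thesis
    using children by blast
qed

lemma falsified_branch:
  fixes lab :: "nat list \<Rightarrow> ('l, 'p) seq" and I :: "'l \<Rightarrow> 'w"
  assumes "pre_proof P lab" and "transp prec" and "falsifies prec M0 M1 V (lab []) I"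
  shows "\<exists>b J. inf_branch P b \<and> (\<forall>k. falsifies prec M0 M1 V (lab (b k)) J)"
proof -
  \<comment> \<open>The length condition makes the chosen sequence of nodes start at the root.\<close>
  define node where "node k st \<longleftrightarrow>
    fst st \<in> P \<and> length (fst st) = k \<and> falsifies prec M0 M1 V (lab (fst st)) (snd st)"
    for k and st :: "nat list \<times> ('l \<Rightarrow> 'w)"
  define extends where "extends st st' \<longleftrightarrow> (\<exists>i. fst st' = fst st @ [i]) \<and>
    seq_labels (lab (fst st)) \<subseteq> seq_labels (lab (fst st')) \<and>
    (\<forall>z\<in>seq_labels (lab (fst st)). snd st' z = snd st z)"
    for st st' :: "nat list \<times> ('l \<Rightarrow> 'w)"
  have "\<exists>f. \<forall>k. node k (f k) \<and> extends (f k) (f (Suc k))"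
  proof (rule dependent_nat_choice)
    show "\<exists>st. node 0 st"
      using assms(1,3) unfolding node_def pre_proof_def by (intro exI[of _ "([], I)"]) simp
    show "\<exists>st'. node (Suc k) st' \<and> extends st st'" if st: "node k st" for st k
    proof -
      obtain i I' where "fst st @ [i] \<in> P" and "falsifies prec M0 M1 V (lab (fst st @ [i])) I'"
        and "seq_labels (lab (fst st)) \<subseteq> seq_labels (lab (fst st @ [i]))"
        and "\<forall>z\<in>seq_labels (lab (fst st)). I' z = snd st z"
        using falsified_child[OF assms(1) _ assms(2)] st unfolding node_def by blast
      with st show ?thesis
        unfolding node_def extends_def by (intro exI[of _ "(fst st @ [i], I')"]) auto
    qed
  qed
  then obtain f where f: "\<And>k. node k (f k)" "\<And>k. extends (f k) (f (Suc k))"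
    by blast
  define b where "b k = fst (f k)" for k
  have "inf_branch P b"
    using f unfolding inf_branch_def b_def node_def extends_def by auto
  moreover obtain J where J: "\<forall>k. \<forall>z\<in>seq_labels (lab (b k)). J z = snd (f k) z"
    using ex_union_of_function_chain[of "\<lambda>k. seq_labels (lab (b k))" "\<lambda>k. snd (f k)"] f(2)
    unfolding b_def extends_def by blast
  have "falsifies prec M0 M1 V (lab (b k)) J" for k
    using falsifies_cong[of "lab (b k)" J "snd (f k)"] J f(1) unfolding node_def b_def by blast
  ultimately show ?thesis
    by blast
qed

lemma carlson_model_iff:
  "carlson_model prec \<longleftrightarrow> transp prec \<and> \<not> (\<exists>f. \<forall>i. prec (f i) (f (Suc i)))"
  by (simp add: carlson_model_def transp_def)

lemma no_progressing_trace:
  assumes "carlson_model prec" and "\<And>k. is_interp prec M0 M1 (S k) J"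
  shows "\<not> progressing_trace S x"
proof
  assume "progressing_trace S x"
  then have "is_trace S x" and moving: "\<not> (\<exists>n. \<forall>m\<ge>n. x m = x n)"
    unfolding progressing_trace_def by auto
  then have step: "x (Suc m) = x m \<or> prec (J (x m)) (J (x (Suc m)))" for m
    using assms(2)[of m] unfolding is_trace_def is_interp_def by blast
  then have "(J \<circ> x) (Suc m) = (J \<circ> x) m \<or> prec ((J \<circ> x) m) ((J \<circ> x) (Suc m))" for m
    by (metis comp_apply)
  moreover have "transp prec" and "\<not> (\<exists>f. \<forall>i. prec (f i) (f (Suc i)))"
    using assms(1) unfolding carlson_model_iff by auto
  ultimately obtain n where "\<forall>m\<ge>n. \<not> prec ((J \<circ> x) m) ((J \<circ> x) (Suc m))"
    using eventually_no_ascent by blast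
  then have stay: "x (Suc m) = x m" if "m \<ge> n" for m
    using step that by auto
  have "x m = x n" if "m \<ge> n" for m
    using that by (induction m rule: dec_induct) (auto simp: stay)
  with moving show False
    by blast
qed

theorem theorem2:
  fixes S :: "('l :: countable, 'p :: countable) seq"
    and prec :: "'w \<Rightarrow> 'w \<Rightarrow> bool" and M0 M1 :: "'w set" and V :: "'p \<Rightarrow> 'w set"
  assumes "provable S"
    and "carlson_model prec"
  shows "valid_in prec M0 M1 V S"
proof (rule ccontr)
  obtain P lab where proof_tree: "is_proof P lab" and root: "lab [] = S"
    using assms(1) unfolding provable_def by blast
  assume "\<not> valid_in prec M0 M1 V S"
  then obtain I where "falsifies prec M0 M1 V (lab []) I"
    using root valid_in_iff_not_falsifies by blast
  then obtain b J where branch: "inf_branch P b"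
    and falsified: "\<And>k. falsifies prec M0 M1 V (lab (b k)) J"
    using falsified_branch proof_tree assms(2) unfolding is_proof_def carlson_model_iff by blast
  obtain x where "progressing_trace (\<lambda>k. lab (b k)) x"
    using proof_tree branch unfolding is_proof_def by blast
  moreover have "\<And>k. is_interp prec M0 M1 (lab (b k)) J"
    using falsified falsifies_is_interp by blast
  ultimately show False
    using no_progressing_trace[of prec M0 M1 "\<lambda>k. lab (b k)" J] assms(2) by blast
qed

end
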